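(* Let $\alpha\in(0,1]$, $r\in\mathbb{N}$, $\gamma=\alpha/(4\alpha+4d)$, $\mathcal{D}$ a dyadic grid, and let $S',R\in\mathcal{D}$ with $S'\subset R$ and $S'$ $r$-good. Let $x\in S'$, $t\in(\ell R/2,\ell R)$, and let $Q\in\mathcal{D}$ with $Q\supset S'$. Then there exists $\eta>0$ (depending only on $\alpha,d$) such that \[ K_t^{S'}\mathbf{1}_{\mathbb{R}^d\setminus Q}(x)\lesssim\left(\frac{\ell S'}{\max(\ell R^{(r)},\ell Q)}\right)^\eta,\qquad K_t^{S'}\mathbf{1}_Q(x)\lesssim\frac{|Q|}{|R|}\left(\frac{\ell S'}{\ell R}\right)^{\alpha/2}, \] with implicit constants depending only on $\alpha,d,r$.
   Context: $\mathbb{R}^d$ carries the $\ell^\infty$ metric. A dyadic grid is the standard grid $\mathcal{D}^0=\bigcup_j\{2^{-j}([0,1)^d+m):m\in\mathbb{Z}^d\}$ or a translate $\mathcal{D}^\omega=\{R+\sum_{i>j}\omega_i2^{-i}:R\in\mathcal{D}^0,\ \ell R=2^{-j}\}$. $R^{(r)}$ is the $r$-th dyadic ancestor of $R$. A cube $S'\in\mathcal{D}$ is $r$-good if $\operatorname{d}(S',\partial P)>(\ell S')^\gamma(\ell P)^{1-\gamma}$ for every $P\in\mathcal{D}$ with $\ell P\ge2^r\ell S'$. With $x_{S'}$ the centre of $S'$, \[K_t^{S'}f(x)=\int_{\mathbb{R}^d}\frac{(t|x-x_{S'}|)^{\alpha/2}}{(t+|x-y|)^{\alpha+d}}|f(y)|\,\mathrm{d}y.\]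 *)

theory Defs
  imports "HOL-Analysis.Analysis"
begin

definition linf :: "real ^ 'n \<Rightarrow> real" where
  "linf x = (MAX i. \<bar>x $ i\<bar>)"

definition linf_setdist :: "(real ^ 'n) set \<Rightarrow> (real ^ 'n) set \<Rightarrow> real" where
  "linf_setdist A B = Inf {linf (a - b) | a b. a \<in> A \<and> b \<in> B}"

text \<open>Dyadic grid parameter: \<omega> i \<in> {0,1}^d for every integer i (\<omega> = 0 gives the standard grid).
  Shift of generation j (side length 2^-j): sum over i > j of \<omega>_i 2^-i.\<close>
definition dshift :: "(int \<Rightarrow> 'n \<Rightarrow> bool) \<Rightarrow> int \<Rightarrow> 'n \<Rightarrow> real" where
  "dshift \<omega> j k = (\<Sum>n. (if \<omega> (j + 1 + int n) k then 1 else 0) * (2::real) powr (- real_of_int (j + 1 + int n)))"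

definition dcube :: "(int \<Rightarrow> 'n \<Rightarrow> bool) \<Rightarrow> int \<Rightarrow> ('n \<Rightarrow> int) \<Rightarrow> (real ^ 'n) set" where
  "dcube \<omega> j m = {x. \<forall>k. 2 powr (- real_of_int j) * real_of_int (m k) + dshift \<omega> j k \<le> x $ k
                        \<and> x $ k < 2 powr (- real_of_int j) * (real_of_int (m k) + 1) + dshift \<omega> j k}"

definition dgrid :: "(int \<Rightarrow> 'n \<Rightarrow> bool) \<Rightarrow> (real ^ 'n) set set" where
  "dgrid \<omega> = {dcube \<omega> j m | j m. True}"

definition dside :: "(int \<Rightarrow> 'n \<Rightarrow> bool) \<Rightarrow> (real ^ 'n) set \<Rightarrow> real" where
  "dside \<omega> Q = (THE l. \<exists>j m. Q = dcube \<omega> j m \<and> l = 2 powr (- real_of_int j))"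

definition dcenter :: "(int \<Rightarrow> 'n \<Rightarrow> bool) \<Rightarrow> (real ^ 'n) set \<Rightarrow> real ^ 'n" where
  "dcenter \<omega> Q = (THE c. \<exists>j m. Q = dcube \<omega> j m \<and>
      c = (\<chi> k. 2 powr (- real_of_int j) * (real_of_int (m k) + 1/2) + dshift \<omega> j k))"

definition dancestor :: "(int \<Rightarrow> 'n \<Rightarrow> bool) \<Rightarrow> nat \<Rightarrow> (real ^ 'n) set \<Rightarrow> (real ^ 'n) set" where
  "dancestor \<omega> r Q = (THE P. P \<in> dgrid \<omega> \<and> Q \<subseteq> P \<and> dside \<omega> P = 2 ^ r * dside \<omega> Q)"

definition r_good :: "(int \<Rightarrow> 'n \<Rightarrow> bool) \<Rightarrow> nat \<Rightarrow> real \<Rightarrow> (real ^ 'n) set \<Rightarrow> bool" where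
  "r_good \<omega> r \<gamma> S \<longleftrightarrow> (\<forall>P \<in> dgrid \<omega>. dside \<omega> P \<ge> 2 ^ r * dside \<omega> S \<longrightarrow>
      linf_setdist S (frontier P) > dside \<omega> S powr \<gamma> * dside \<omega> P powr (1 - \<gamma>))"

definition Kop :: "real \<Rightarrow> (int \<Rightarrow> 'n \<Rightarrow> bool) \<Rightarrow> real \<Rightarrow> (real ^ 'n) set \<Rightarrow> (real ^ 'n \<Rightarrow> real) \<Rightarrow> real ^ 'n \<Rightarrow> real" where
  "Kop \<alpha> \<omega> t S f x = (\<integral> y. (t * linf (x - dcenter \<omega> S)) powr (\<alpha> / 2)
        / (t + linf (x - y)) powr (\<alpha> + real CARD('n)) * \<bar>f y\<bar> \<partial>lborel)"

end

theory Submission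
  imports Defs
begin

text \<open>
  Write s, L and l for the side lengths of S, R and Q. As x lies in S, the weight
  (t |x - x_S|)^(\<alpha>/2) is at most (t s)^(\<alpha>/2), and t is comparable to L. On Q the kernel
  is at most t^-(\<alpha>+d), which gives the second bound. Covering by dyadic sup-norm annuli, the kernel
  (t + |x - y|)^-(\<alpha>+d) has total mass O(t^-\<alpha>), and mass O(D^-\<alpha>) on the points at
  distance at least D from x. If l \<le> 2^r L, the total mass gives the first bound with
  \<eta> = \<alpha>/4, because (s/L)^(\<alpha>/2) \<le> 2^(r\<alpha>/2) (s/(2^r L))^(\<alpha>/4). Otherwise S is
  r-good relative to Q, so every y outside Q is at distance at least D = s^\<gamma> l^(1-\<gamma>) from x;
  as t < l, the tail bound gives (l s)^(\<alpha>/2) D^-\<alpha> = (s/l)^(\<alpha>/2 - \<gamma>\<alpha>), which is at most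
  (s/l)^(\<alpha>/4) since \<gamma> \<le> 1/4.
\<close>

section \<open>The sup norm\<close>

lemma linf_ge: "\<bar>x $ i\<bar> \<le> linf x"
  unfolding linf_def by (rule Max_ge) auto

lemma linf_nonneg: "0 \<le> linf x"
  using linf_ge[of x] abs_ge_zero order_trans by blast

lemma linf_less_iff: "linf x < r \<longleftrightarrow> (\<forall>i. \<bar>x $ i\<bar> < r)"
  unfolding linf_def by (subst Max_less_iff) auto

lemma linf_le_iff: "linf x \<le> r \<longleftrightarrow> (\<forall>i. \<bar>x $ i\<bar> \<le> r)"
  unfolding linf_def by (subst Max_le_iff) auto

lemma linf_scale: "linf (c *\<^sub>R x) = \<bar>c\<bar> * linf x"
proof (rule antisym)
  show "linf (c *\<^sub>R x) \<le> \<bar>c\<bar> * linf x"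
    unfolding linf_le_iff by (auto simp: abs_mult intro: mult_left_mono linf_ge)
  have "linf x \<in> range (\<lambda>i. \<bar>x $ i\<bar>)"
    unfolding linf_def by (rule Max_in) auto
  then obtain i where "linf x = \<bar>x $ i\<bar>" by blast
  then have "\<bar>c\<bar> * linf x = \<bar>(c *\<^sub>R x) $ i\<bar>" by (simp add: abs_mult)
  also have "\<dots> \<le> linf (c *\<^sub>R x)" by (rule linf_ge)
  finally show "\<bar>c\<bar> * linf x \<le> linf (c *\<^sub>R x)" .
qed

lemma borel_measurable_linf [measurable]: "linf \<in> borel_measurable borel"
  unfolding linf_def by measurable

definition linf_ball :: "real ^ 'n \<Rightarrow> real \<Rightarrow> (real ^ 'n) set" where
  "linf_ball x r = box (\<chi> i. x $ i - r) (\<chi> i. x $ i + r)"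

lemma mem_linf_ball: "y \<in> linf_ball x r \<longleftrightarrow> linf (x - y) < r"
proof -
  have "\<And>i. (x $ i - r < y $ i \<and> y $ i < x $ i + r) = (\<bar>x $ i - y $ i\<bar> < r)" by arith
  then show ?thesis unfolding linf_ball_def mem_box_cart linf_less_iff by simp
qed

lemma linf_ball_sets [measurable]: "linf_ball x r \<in> sets lborel"
  unfolding linf_ball_def by simp

lemma emeasure_box_cart:
  fixes a b :: "real ^ 'n"
  assumes "\<And>i. a $ i \<le> b $ i"
  shows "emeasure lborel (box a b) = ennreal (\<Prod>i\<in>UNIV. b $ i - a $ i)"
    and "emeasure lborel (cbox a b) = ennreal (\<Prod>i\<in>UNIV. b $ i - a $ i)"
proof -
  have prod: "(\<Prod>c\<in>Basis. (b - a) \<bullet> c) = (\<Prod>i\<in>UNIV. b $ i - a $ i)"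
    by (simp add: Basis_vec_def cart_eq_inner_axis axis_eq_axis prod.UNION_disjoint inner_diff_left)
  have "\<forall>c\<in>Basis. a \<bullet> c \<le> b \<bullet> c"
    using assms by (auto simp: Basis_vec_def cart_eq_inner_axis)
  with prod show "emeasure lborel (box a b) = ennreal (\<Prod>i\<in>UNIV. b $ i - a $ i)"
    and "emeasure lborel (cbox a b) = ennreal (\<Prod>i\<in>UNIV. b $ i - a $ i)"
    by (simp_all add: emeasure_lborel_box_eq emeasure_lborel_cbox_eq)
qed

lemma emeasure_linf_ball:
  fixes x :: "real ^ 'n"
  assumes "0 \<le> r"
  shows "emeasure lborel (linf_ball x r) = ennreal ((2 * r) ^ CARD('n))"
  unfolding linf_ball_def using assms by (subst emeasure_box_cart) auto

lemma linf_setdist_frontier_le: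
  fixes x y :: "real ^ 'n"
  assumes x: "x \<in> S" and "S \<subseteq> Q" and "y \<notin> Q"
  shows "linf_setdist S (frontier Q) \<le> linf (x - y)"
proof -
  have "closed_segment x y \<inter> frontier Q \<noteq> {}"
    using assms by (intro connected_Int_frontier[OF connected_segment]) auto
  then obtain u where u: "0 \<le> u" "u \<le> 1" and z: "(1 - u) *\<^sub>R x + u *\<^sub>R y \<in> frontier Q"
    by (auto simp: in_segment)
  let ?z = "(1 - u) *\<^sub>R x + u *\<^sub>R y"
  have "linf_setdist S (frontier Q) \<le> linf (x - ?z)"
    unfolding linf_setdist_def
  proof (rule cInf_lower)
    show "linf (x - ?z) \<in> {linf (a - b) |a b. a \<in> S \<and> b \<in> frontier Q}" using x z by blast
    show "bdd_below {linf (a - b) |a b. a \<in> S \<and> b \<in> frontier Q}"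
      unfolding bdd_below_def using linf_nonneg by blast
  qed
  also have "x - ?z = u *\<^sub>R (x - y)" by (simp add: algebra_simps)
  also have "linf (u *\<^sub>R (x - y)) \<le> linf (x - y)"
    using u linf_nonneg[of "x - y"] by (simp add: linf_scale mult_left_le_one_le)
  finally show ?thesis .
qed

section \<open>Dyadic cubes\<close>

lemma dshift_summable:
  "summable (\<lambda>n. (if \<omega> (j + 1 + int n) k then 1 else 0) * (2::real) powr (- real_of_int (j + 1 + int n)))"
proof (rule summable_comparison_test)
  have "(2::real) powr (- real_of_int (j + 1 + int n)) = 2 powr (- real_of_int (j + 1)) * 2 powr (- real n)" for n
    by (simp add: powr_add[symmetric] algebra_simps)
  also have "(2::real) powr (- real n) = (1 / 2) ^ n" for n
    by (simp add: powr_minus powr_realpow power_divide inverse_eq_divide)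
  finally have "(2::real) powr (- real_of_int (j + 1 + int n)) = 2 powr (- real_of_int (j + 1)) * (1 / 2) ^ n" for n .
  then show "\<exists>N. \<forall>n\<ge>N. norm ((if \<omega> (j + 1 + int n) k then 1 else 0) * (2::real) powr (- real_of_int (j + 1 + int n)))
      \<le> 2 powr (- real_of_int (j + 1)) * (1 / 2) ^ n"
    by simp
  show "summable (\<lambda>n. 2 powr (- real_of_int (j + 1)) * (1 / 2::real) ^ n)"
    by (intro summable_mult summable_geometric) auto
qed

lemma dshift_pred:
  "dshift \<omega> (j - 1) k = (if \<omega> j k then 1 else 0) * 2 powr (- real_of_int j) + dshift \<omega> j k"
  using suminf_split_head[OF dshift_summable[of \<omega> "j - 1" k]]
  by (simp add: dshift_def algebra_simps)

lemma mem_dcube: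
  "x \<in> dcube \<omega> j m \<longleftrightarrow> (\<forall>k. 2 powr (- real_of_int j) * real_of_int (m k) + dshift \<omega> j k \<le> x $ k
      \<and> x $ k < 2 powr (- real_of_int j) * (real_of_int (m k) + 1) + dshift \<omega> j k)"
  unfolding dcube_def by simp

definition dcorner :: "(int \<Rightarrow> 'n \<Rightarrow> bool) \<Rightarrow> int \<Rightarrow> ('n \<Rightarrow> int) \<Rightarrow> real ^ 'n" where
  "dcorner \<omega> j m = (\<chi> k. 2 powr (- real_of_int j) * real_of_int (m k) + dshift \<omega> j k)"

lemma dcorner_in_dcube: "dcorner \<omega> j m \<in> dcube \<omega> j m"
  unfolding mem_dcube dcorner_def by (simp add: algebra_simps)

lemma dcube_index_unique:
  assumes "x \<in> dcube \<omega> j m" "x \<in> dcube \<omega> j m'"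
  shows "m = m'"
proof
  fix k
  let ?u = "(2::real) powr (- real_of_int j)"
  from assms have "?u * m k + dshift \<omega> j k \<le> x $ k" "x $ k < ?u * (m k + 1) + dshift \<omega> j k"
    "?u * m' k + dshift \<omega> j k \<le> x $ k" "x $ k < ?u * (m' k + 1) + dshift \<omega> j k"
    unfolding mem_dcube by auto
  then have "?u * m k < ?u * (m' k + 1)" "?u * m' k < ?u * (m k + 1)"
    by linarith+
  then have "real_of_int (m k) < m' k + 1" "real_of_int (m' k) < m k + 1"
    by (simp_all only: mult_less_cancel_left_pos powr_gt_zero)
  then show "m k = m' k" by linarith
qed

lemma dcube_between_boxes:
  "box (dcorner \<omega> j m) (dcorner \<omega> j m + (\<chi> k. 2 powr (- real_of_int j))) \<subseteq> dcube \<omega> j m"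
  "dcube \<omega> j m \<subseteq> cbox (dcorner \<omega> j m) (dcorner \<omega> j m + (\<chi> k. 2 powr (- real_of_int j)))"
  unfolding mem_dcube dcorner_def mem_box_cart subset_iff
  by (auto simp: algebra_simps) (metis less_imp_le)+

lemma dcube_sets [measurable]: "dcube \<omega> j m \<in> sets lborel"
proof -
  have "dcube \<omega> j m = (\<Inter>k. {x. 2 powr (- real_of_int j) * real_of_int (m k) + dshift \<omega> j k \<le> x $ k}
      \<inter> {x. x $ k < 2 powr (- real_of_int j) * (real_of_int (m k) + 1) + dshift \<omega> j k})"
    by (auto simp: dcube_def)
  then show ?thesis by simp
qed

lemma emeasure_dcube:
  fixes \<omega> :: "int \<Rightarrow> 'n::finite \<Rightarrow> bool"
  shows "emeasure lborel (dcube \<omega> j m) = ennreal ((2 powr (- real_of_int j)) ^ CARD('n))"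
proof -
  let ?a = "dcorner \<omega> j m" and ?b = "dcorner \<omega> j m + (\<chi> k. 2 powr (- real_of_int j))"
  have "emeasure lborel (box ?a ?b) \<le> emeasure lborel (dcube \<omega> j m)"
    by (rule emeasure_mono[OF dcube_between_boxes(1)]) (use dcube_sets in simp)
  moreover have "emeasure lborel (dcube \<omega> j m) \<le> emeasure lborel (cbox ?a ?b)"
    by (rule emeasure_mono[OF dcube_between_boxes(2)]) simp
  moreover have "\<And>i. ?a $ i \<le> ?b $ i" by simp
  ultimately show ?thesis using emeasure_box_cart[of ?a ?b] by simp
qed

lemma measure_dcube:
  fixes \<omega> :: "int \<Rightarrow> 'n::finite \<Rightarrow> bool"
  shows "measure lborel (dcube \<omega> j m) = (2 powr (- real_of_int j)) ^ CARD('n)"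
  unfolding measure_def emeasure_dcube by simp

lemma dcube_inject:
  fixes \<omega> :: "int \<Rightarrow> 'n::finite \<Rightarrow> bool"
  assumes eq: "dcube \<omega> j m = dcube \<omega> j' m'"
  shows "j = j' \<and> m = m'"
proof -
  have "((2::real) powr (- real_of_int j)) ^ CARD('n) = (2 powr (- real_of_int j')) ^ CARD('n)"
    using measure_dcube[of \<omega> j m] measure_dcube[of \<omega> j' m'] eq by simp
  then have "j = j'" by (simp add: power_eq_iff_eq_base powr_inj)
  with eq dcorner_in_dcube[of \<omega> j m] show ?thesis by (auto intro: dcube_index_unique)
qed

lemma dside_dcube: "dside \<omega> (dcube \<omega> j m) = 2 powr (- real_of_int j)"
  unfolding dside_def by (rule the_equality) (auto dest: dcube_inject)

lemma dcenter_dcube: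
  "dcenter \<omega> (dcube \<omega> j m) = (\<chi> k. 2 powr (- real_of_int j) * (real_of_int (m k) + 1/2) + dshift \<omega> j k)"
  unfolding dcenter_def by (rule the_equality) (auto dest: dcube_inject)

lemma dcube_parent_exists: "\<exists>m'. dcube \<omega> j m \<subseteq> dcube \<omega> (j - 1) m'"
proof -
  define b :: "'a \<Rightarrow> int" where "b k = (if \<omega> j k then 1 else 0)" for k
  have "dcube \<omega> j m \<subseteq> dcube \<omega> (j - 1) (\<lambda>k. (m k - b k) div 2)"
  proof
    fix x assume x: "x \<in> dcube \<omega> j m"
    show "x \<in> dcube \<omega> (j - 1) (\<lambda>k. (m k - b k) div 2)"
      unfolding mem_dcube
    proof
      fix k
      let ?u = "(2::real) powr (- real_of_int j)" and ?m = "(m k - b k) div 2"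
      have u2: "(2::real) powr (- real_of_int (j - 1)) = 2 * ?u"
        using powr_add[of 2 1 "- real_of_int j"] by simp
      have ds: "dshift \<omega> (j - 1) k = real_of_int (b k) * ?u + dshift \<omega> j k"
        using dshift_pred[of \<omega> j k] by (simp add: b_def)
      have "real_of_int (2 * ?m + b k) \<le> m k" "real_of_int (m k + 1) \<le> 2 * ?m + 2 + b k"
        by linarith+
      then have "?u * real_of_int (2 * ?m + b k) \<le> ?u * m k"
        "?u * real_of_int (m k + 1) \<le> ?u * real_of_int (2 * ?m + 2 + b k)"
        by (simp_all only: mult_le_cancel_left_pos powr_gt_zero)
      then have "2 * ?u * ?m + real_of_int (b k) * ?u \<le> ?u * m k"
        "?u * (real_of_int (m k) + 1) \<le> 2 * ?u * (real_of_int ?m + 1) + real_of_int (b k) * ?u"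
        by (simp_all add: algebra_simps)
      moreover from x have "?u * m k + dshift \<omega> j k \<le> x $ k"
        "x $ k < ?u * (real_of_int (m k) + 1) + dshift \<omega> j k"
        unfolding mem_dcube by auto
      ultimately show "2 powr - real_of_int (j - 1) * real_of_int ?m + dshift \<omega> (j - 1) k \<le> x $ k \<and>
          x $ k < 2 powr - real_of_int (j - 1) * (real_of_int ?m + 1) + dshift \<omega> (j - 1) k"
        unfolding u2 ds by linarith
    qed
  qed
  then show ?thesis by blast
qed

lemma dcube_ancestor_exists: "\<exists>m'. dcube \<omega> j m \<subseteq> dcube \<omega> (j - int r) m'"
proof (induction r)
  case (Suc r)
  then obtain m' where "dcube \<omega> j m \<subseteq> dcube \<omega> (j - int r) m'" by blast
  moreover obtain m'' where "dcube \<omega> (j - int r) m' \<subseteq> dcube \<omega> (j - int r - 1) m''"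
    using dcube_parent_exists by blast
  ultimately show ?case by (auto simp: algebra_simps)
qed auto

lemma dgrid_sets: "Q \<in> dgrid \<omega> \<Longrightarrow> Q \<in> sets lborel"
  using dcube_sets by (auto simp: dgrid_def)

lemma dside_pos: "Q \<in> dgrid \<omega> \<Longrightarrow> 0 < dside \<omega> Q"
  by (auto simp: dgrid_def dside_dcube)

lemma emeasure_dgrid:
  fixes \<omega> :: "int \<Rightarrow> 'n::finite \<Rightarrow> bool"
  shows "Q \<in> dgrid \<omega> \<Longrightarrow> emeasure lborel Q = ennreal (dside \<omega> Q ^ CARD('n))"
  by (auto simp: dgrid_def emeasure_dcube dside_dcube)

lemma measure_dgrid:
  fixes \<omega> :: "int \<Rightarrow> 'n::finite \<Rightarrow> bool"
  shows "Q \<in> dgrid \<omega> \<Longrightarrow> measure lborel Q = dside \<omega> Q ^ CARD('n)"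
  by (auto simp: dgrid_def measure_dcube dside_dcube)

lemma dside_mono:
  fixes \<omega> :: "int \<Rightarrow> 'n::finite \<Rightarrow> bool"
  assumes S: "S \<in> dgrid \<omega>" and R: "R \<in> dgrid \<omega>" and "S \<subseteq> R"
  shows "dside \<omega> S \<le> dside \<omega> R"
proof -
  have "emeasure lborel S \<le> emeasure lborel R"
    using assms by (intro emeasure_mono dgrid_sets)
  then have "dside \<omega> S ^ CARD('n) \<le> dside \<omega> R ^ CARD('n)"
    using S R by (simp add: emeasure_dgrid dside_pos less_imp_le)
  then show ?thesis
    using dside_pos[OF S] dside_pos[OF R] by (simp add: power_mono_iff)
qed

lemma dside_dancestor:
  fixes \<omega> :: "int \<Rightarrow> 'n::finite \<Rightarrow> bool"
  assumes "R \<in> dgrid \<omega>"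
  shows "dside \<omega> (dancestor \<omega> r R) = 2 ^ r * dside \<omega> R"
proof -
  obtain j m where R: "R = dcube \<omega> j m" using assms unfolding dgrid_def by blast
  obtain m' where sub: "R \<subseteq> dcube \<omega> (j - int r) m'" using dcube_ancestor_exists R by blast
  have side: "(2::real) powr (- real_of_int (j - int r)) = 2 ^ r * 2 powr (- real_of_int j)"
    by (simp add: powr_add[symmetric] powr_realpow[symmetric] algebra_simps)
  have "dancestor \<omega> r R = dcube \<omega> (j - int r) m'"
    unfolding dancestor_def
  proof (rule the_equality)
    show "dcube \<omega> (j - int r) m' \<in> dgrid \<omega> \<and> R \<subseteq> dcube \<omega> (j - int r) m' \<and>
        dside \<omega> (dcube \<omega> (j - int r) m') = 2 ^ r * dside \<omega> R"
      using sub unfolding R dside_dcube side dgrid_def by auto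
  next
    fix P assume P: "P \<in> dgrid \<omega> \<and> R \<subseteq> P \<and> dside \<omega> P = 2 ^ r * dside \<omega> R"
    then obtain j' m'' where P_eq: "P = dcube \<omega> j' m''" unfolding dgrid_def by blast
    have "(2::real) powr (- real_of_int j') = 2 powr (- real_of_int (j - int r))"
      using P unfolding P_eq R dside_dcube side by simp
    then have "j' = j - int r" by (simp add: powr_inj)
    moreover have "dcorner \<omega> j m \<in> P \<inter> dcube \<omega> (j - int r) m'"
      using P sub dcorner_in_dcube[of \<omega> j m] R by auto
    ultimately show "P = dcube \<omega> (j - int r) m'"
      using P_eq dcube_index_unique by blast
  qed
  then show ?thesis using R side by (simp add: dside_dcube)
qed

lemma linf_dcenter_le:
  assumes "S \<in> dgrid \<omega>" and "x \<in> S"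
  shows "linf (x - dcenter \<omega> S) \<le> dside \<omega> S"
proof -
  obtain j m where S: "S = dcube \<omega> j m" using assms unfolding dgrid_def by blast
  have "\<bar>x $ k - (2 powr - real_of_int j * (real_of_int (m k) + 1 / 2) + dshift \<omega> j k)\<bar>
      \<le> 2 powr - real_of_int j" for k
  proof -
    from assms(2) have "2 powr - real_of_int j * m k + dshift \<omega> j k \<le> x $ k"
      "x $ k < 2 powr - real_of_int j * (m k + 1) + dshift \<omega> j k"
      unfolding S mem_dcube by auto
    then show ?thesis using powr_gt_zero[of 2 "- real_of_int j"] by (simp add: algebra_simps abs_le_iff)
  qed
  then show ?thesis by (simp add: S linf_le_iff dcenter_dcube dside_dcube)
qed

section \<open>Integrals of the kernel\<close>

lemma dyadic_shell_mass:
  fixes D \<alpha> :: real and i n :: nat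
  assumes "0 < D"
  shows "(2 ^ i * D) powr (- (\<alpha> + real n)) * (2 * (2 ^ (i + 1) * D)) ^ n
       = 4 powr real n * D powr (- \<alpha>) * (2 powr (- \<alpha>)) ^ i"
  using assms by (simp add: powr_realpow[symmetric] powr_def exp_add[symmetric] ln_mult algebra_simps)

lemma linf_powr_le_dyadic_sum:
  fixes x y :: "real ^ 'n"
  assumes D: "0 < D" and \<beta>: "0 \<le> \<beta>" and far: "D \<le> linf (x - y)"
  shows "ennreal (linf (x - y) powr (- \<beta>))
    \<le> (\<Sum>i. ennreal ((2 ^ i * D) powr (- \<beta>)) * indicator (linf_ball x (2 ^ (i + 1) * D)) y)"
proof -
  let ?\<rho> = "linf (x - y)"
  define k where "k = nat \<lfloor>log 2 (?\<rho> / D)\<rfloor>"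
  have "1 \<le> ?\<rho> / D" using D far by simp
  then have "\<lfloor>log 2 (?\<rho> / D)\<rfloor> = int k"
    unfolding k_def by simp
  then have "2 powr real k \<le> ?\<rho> / D" "?\<rho> / D < 2 powr (real k + 1)"
    using D far by (simp_all add: floor_log_eq_powr_iff)
  then have lower: "2 ^ k * D \<le> ?\<rho>" and upper: "?\<rho> < 2 ^ (k + 1) * D"
    using D by (simp_all add: powr_realpow powr_add field_simps)
  have "?\<rho> powr (- \<beta>) \<le> (2 ^ k * D) powr (- \<beta>)"
    using lower D \<beta> by (intro powr_mono2') auto
  then have "ennreal (?\<rho> powr (- \<beta>))
      \<le> ennreal ((2 ^ k * D) powr (- \<beta>)) * indicator (linf_ball x (2 ^ (k + 1) * D)) y"
    using upper by (simp add: mem_linf_ball ennreal_leI)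
  also have "\<dots> \<le> (\<Sum>i. ennreal ((2 ^ i * D) powr (- \<beta>)) * indicator (linf_ball x (2 ^ (i + 1) * D)) y)"
    (is "_ \<le> suminf ?term")
    by (rule order_trans[OF eq_refl sum_le_suminf[of ?term "{k}"]])
      (simp_all only: sum.insert finite.intros empty_iff not_False_eq_True sum.empty add_0_right summableI zero_le)
  finally show ?thesis .
qed

lemma nn_integral_linf_tail_le:
  fixes x :: "real ^ 'n" and \<alpha> :: real
  assumes D: "0 < D" and \<alpha>: "0 < \<alpha>"
  shows "(\<integral>\<^sup>+ y. ennreal (linf (x - y) powr - (\<alpha> + real CARD('n))) * indicator {y. D \<le> linf (x - y)} y \<partial>lborel)
    \<le> ennreal (4 powr real CARD('n) / (1 - 2 powr - \<alpha>) * D powr - \<alpha>)"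
proof -
  let ?\<beta> = "\<alpha> + real CARD('n)" and ?q = "(2::real) powr - \<alpha>"
  let ?c = "\<lambda>i::nat. (2 ^ i * D) powr - ?\<beta>" and ?B = "\<lambda>i::nat. linf_ball x (2 ^ (i + 1) * D)"
  have q: "0 < ?q" "?q < 1" using \<alpha> by (simp_all add: powr_less_one)
  have majorant: "ennreal (linf (x - y) powr - ?\<beta>) * indicator {y. D \<le> linf (x - y)} y
      \<le> (\<Sum>i. ennreal (?c i) * indicator (?B i) y)" for y
  proof (cases "D \<le> linf (x - y)")
    case True
    then show ?thesis using linf_powr_le_dyadic_sum[OF D _ True, of ?\<beta>] \<alpha> by simp
  qed simp
  have "(\<integral>\<^sup>+ y. ennreal (linf (x - y) powr - ?\<beta>) * indicator {y. D \<le> linf (x - y)} y \<partial>lborel)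
      \<le> (\<integral>\<^sup>+ y. (\<Sum>i. ennreal (?c i) * indicator (?B i) y) \<partial>lborel)"
    by (rule nn_integral_mono) (rule majorant)
  also have "\<dots> = (\<Sum>i. ennreal (?c i) * emeasure lborel (?B i))"
    by (subst nn_integral_suminf) (simp_all only: nn_integral_cmult_indicator linf_ball_sets borel_measurable_indicator
      borel_measurable_times_ennreal borel_measurable_const)
  also have "\<dots> = (\<Sum>i. ennreal (4 powr real CARD('n) * D powr - \<alpha> * ?q ^ i))"
  proof (rule suminf_cong)
    fix i
    have "ennreal (?c i) * emeasure lborel (?B i) = ennreal (?c i * (2 * (2 ^ (i + 1) * D)) ^ CARD('n))"
      using D by (simp add: emeasure_linf_ball ennreal_mult')
    then show "ennreal (?c i) * emeasure lborel (?B i) = ennreal (4 powr real CARD('n) * D powr - \<alpha> * ?q ^ i)"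
      by (simp only: dyadic_shell_mass D)
  qed
  also have "\<dots> = ennreal (\<Sum>i. 4 powr real CARD('n) * D powr - \<alpha> * ?q ^ i)"
    using q by (intro suminf_ennreal2) (auto intro!: summable_mult summable_geometric)
  also have "(\<Sum>i. 4 powr real CARD('n) * D powr - \<alpha> * ?q ^ i) = 4 powr real CARD('n) / (1 - ?q) * D powr - \<alpha>"
    using q by (subst suminf_mult) (auto simp: suminf_geometric)
  finally show ?thesis .
qed

lemma nn_integral_linf_kernel_le:
  fixes x :: "real ^ 'n" and \<alpha> :: real
  assumes t: "0 < t" and \<alpha>: "0 < \<alpha>"
  shows "(\<integral>\<^sup>+ y. ennreal ((t + linf (x - y)) powr - (\<alpha> + real CARD('n))) \<partial>lborel)
    \<le> ennreal ((2 ^ CARD('n) + 4 powr real CARD('n) / (1 - 2 powr - \<alpha>)) * t powr - \<alpha>)"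
proof -
  let ?\<beta> = "\<alpha> + real CARD('n)"
  define T where "T = 4 powr real CARD('n) / (1 - 2 powr - \<alpha>)"
  have T: "0 \<le> T" using \<alpha> by (simp add: T_def powr_less_one less_imp_le)
  have near_far: "ennreal ((t + linf (x - y)) powr - ?\<beta>)
      \<le> ennreal (t powr - ?\<beta>) * indicator (linf_ball x t) y
        + ennreal (linf (x - y) powr - ?\<beta>) * indicator {y. t \<le> linf (x - y)} y" for y
  proof (cases "linf (x - y) < t")
    case True
    then have "(t + linf (x - y)) powr - ?\<beta> \<le> t powr - ?\<beta>"
      using t \<alpha> linf_nonneg[of "x - y"] by (intro powr_mono2') auto
    with True show ?thesis by (simp add: mem_linf_ball)
  next
    case False
    then have "(t + linf (x - y)) powr - ?\<beta> \<le> linf (x - y) powr - ?\<beta>"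
      using t \<alpha> by (intro powr_mono2') auto
    with False show ?thesis by (simp add: mem_linf_ball)
  qed
  have "(\<integral>\<^sup>+ y. ennreal ((t + linf (x - y)) powr - ?\<beta>) \<partial>lborel)
      \<le> (\<integral>\<^sup>+ y. ennreal (t powr - ?\<beta>) * indicator (linf_ball x t) y
        + ennreal (linf (x - y) powr - ?\<beta>) * indicator {y. t \<le> linf (x - y)} y \<partial>lborel)"
    by (rule nn_integral_mono) (rule near_far)
  also have "\<dots> = ennreal (t powr - ?\<beta>) * emeasure lborel (linf_ball x t)
      + (\<integral>\<^sup>+ y. ennreal (linf (x - y) powr - ?\<beta>) * indicator {y. t \<le> linf (x - y)} y \<partial>lborel)"
  proof -
    have "(\<integral>\<^sup>+ y. ennreal (t powr - ?\<beta>) * indicator (linf_ball x t) y \<partial>lborel)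
        = ennreal (t powr - ?\<beta>) * emeasure lborel (linf_ball x t)"
      by (simp only: nn_integral_cmult_indicator linf_ball_sets)
    then show ?thesis by (subst nn_integral_add) auto
  qed
  also have "\<dots> \<le> ennreal (t powr - ?\<beta> * (2 * t) ^ CARD('n)) + ennreal (T * t powr - \<alpha>)"
    using t \<alpha> unfolding T_def
    by (intro add_mono nn_integral_linf_tail_le) (simp_all add: emeasure_linf_ball ennreal_mult')
  also have "t powr - ?\<beta> * (2 * t) ^ CARD('n) = 2 ^ CARD('n) * t powr - \<alpha>"
    using t by (simp add: power_mult_distrib powr_realpow[symmetric] powr_add[symmetric])
  also have "ennreal (2 ^ CARD('n) * t powr - \<alpha>) + ennreal (T * t powr - \<alpha>)
      = ennreal ((2 ^ CARD('n) + T) * t powr - \<alpha>)"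
    using T by (subst ennreal_plus[symmetric]) (simp_all add: distrib_right)
  finally show ?thesis unfolding T_def .
qed

section \<open>Estimates for the operator\<close>

lemma kernel_weight_le:
  fixes \<rho> s L t \<alpha> d :: real
  assumes \<rho>: "0 \<le> \<rho>" "\<rho> \<le> s" and L: "0 < L" and t: "L / 2 < t" and \<alpha>: "0 \<le> \<alpha>" and d: "0 \<le> d"
  shows "(t * \<rho>) powr (\<alpha> / 2) * t powr - (\<alpha> + d) \<le> 2 powr (\<alpha> / 2 + d) * (s / L) powr (\<alpha> / 2) / L powr d"
proof -
  have t0: "0 < t" and s: "0 \<le> s" using L t \<rho> by linarith+
  have "(t * \<rho>) powr (\<alpha> / 2) * t powr - (\<alpha> + d) \<le> (t * s) powr (\<alpha> / 2) * t powr - (\<alpha> + d)"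
    using \<rho> t0 \<alpha> by (intro mult_right_mono powr_mono2) auto
  also have "\<dots> = s powr (\<alpha> / 2) * t powr - (\<alpha> / 2 + d)"
    using t0 s by (simp add: powr_mult powr_add[symmetric])
  also have "\<dots> \<le> s powr (\<alpha> / 2) * (L / 2) powr - (\<alpha> / 2 + d)"
    using t L \<alpha> d by (intro mult_left_mono powr_mono2') auto
  also have "\<dots> = 2 powr (\<alpha> / 2 + d) * (s / L) powr (\<alpha> / 2) / L powr d"
    using s L by (simp add: powr_divide powr_minus_divide powr_add powr_diff)
  finally show ?thesis .
qed

lemma Kop_le_of_nn_integral_le:
  fixes f :: "real ^ 'n \<Rightarrow> real"
  assumes f: "f \<in> borel_measurable lborel" and B: "0 \<le> B"
    and bound: "(\<integral>\<^sup>+ y. ennreal ((t + linf (x - y)) powr - (\<alpha> + real CARD('n)) * \<bar>f y\<bar>) \<partial>lborel)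
      \<le> ennreal B"
  shows "Kop \<alpha> \<omega> t S f x \<le> (t * linf (x - dcenter \<omega> S)) powr (\<alpha> / 2) * B"
  \<comment> \<open>No integrability is needed: a non-integrable integrand has Bochner integral 0.\<close>
proof -
  define A where "A = (t * linf (x - dcenter \<omega> S)) powr (\<alpha> / 2)"
  have A: "0 \<le> A" by (simp add: A_def)
  have "Kop \<alpha> \<omega> t S f x = (\<integral> y. A * ((t + linf (x - y)) powr - (\<alpha> + real CARD('n)) * \<bar>f y\<bar>) \<partial>lborel)"
    unfolding Kop_def A_def
    by (intro Bochner_Integration.integral_cong refl) (simp only: powr_minus divide_inverse mult.assoc)
  also have "\<dots> \<le> A * B"
  proof (rule integral_real_bounded)
    have "(\<integral>\<^sup>+ y. ennreal (A * ((t + linf (x - y)) powr - (\<alpha> + real CARD('n)) * \<bar>f y\<bar>)) \<partial>lborel)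
        = ennreal A * (\<integral>\<^sup>+ y. ennreal ((t + linf (x - y)) powr - (\<alpha> + real CARD('n)) * \<bar>f y\<bar>) \<partial>lborel)"
      using A f by (subst nn_integral_cmult[symmetric]) (auto intro!: nn_integral_cong simp: ennreal_mult)
    also have "\<dots> \<le> ennreal A * ennreal B"
      using bound by (rule mult_left_mono) simp
    finally show "(\<integral>\<^sup>+ y. ennreal (A * ((t + linf (x - y)) powr - (\<alpha> + real CARD('n)) * \<bar>f y\<bar>)) \<partial>lborel)
        \<le> ennreal (A * B)"
      using A B by (simp add: ennreal_mult)
  qed (use A B in simp)
  finally show ?thesis unfolding A_def .
qed

lemma Kop_indicator_le_measure:
  fixes Q :: "(real ^ 'n) set"
  assumes t: "0 < t" and \<alpha>: "0 \<le> \<alpha>" and Q: "Q \<in> sets lborel" "emeasure lborel Q < \<infinity>"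
  shows "Kop \<alpha> \<omega> t S (indicator Q) x
    \<le> (t * linf (x - dcenter \<omega> S)) powr (\<alpha> / 2) * (t powr - (\<alpha> + real CARD('n)) * measure lborel Q)"
proof (rule Kop_le_of_nn_integral_le)
  let ?\<beta> = "\<alpha> + real CARD('n)"
  have "ennreal ((t + linf (x - y)) powr - ?\<beta> * \<bar>indicator Q y\<bar>) \<le> ennreal (t powr - ?\<beta>) * indicator Q y" for y
  proof -
    have "(t + linf (x - y)) powr - ?\<beta> \<le> t powr - ?\<beta>"
      using t \<alpha> linf_nonneg[of "x - y"] by (intro powr_mono2') auto
    then show ?thesis by (simp add: indicator_def ennreal_leI)
  qed
  then have "(\<integral>\<^sup>+ y. ennreal ((t + linf (x - y)) powr - ?\<beta> * \<bar>indicator Q y\<bar>) \<partial>lborel)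
      \<le> (\<integral>\<^sup>+ y. ennreal (t powr - ?\<beta>) * indicator Q y \<partial>lborel)"
    by (rule nn_integral_mono)
  also have "\<dots> = ennreal (t powr - ?\<beta>) * emeasure lborel Q"
    using Q by (simp only: nn_integral_cmult_indicator)
  also have "\<dots> = ennreal (t powr - ?\<beta> * measure lborel Q)"
    using Q by (simp add: emeasure_eq_ennreal_measure ennreal_mult)
  finally show "(\<integral>\<^sup>+ y. ennreal ((t + linf (x - y)) powr - ?\<beta> * \<bar>indicator Q y\<bar>) \<partial>lborel)
      \<le> ennreal (t powr - ?\<beta> * measure lborel Q)" .
qed (use Q in simp_all)

lemma Kop_le_kernel_mass:
  fixes f :: "real ^ 'n \<Rightarrow> real"
  assumes t: "0 < t" and \<alpha>: "0 < \<alpha>" and f: "f \<in> borel_measurable lborel" "\<And>y. \<bar>f y\<bar> \<le> 1"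
  shows "Kop \<alpha> \<omega> t S f x \<le> (t * linf (x - dcenter \<omega> S)) powr (\<alpha> / 2)
    * ((2 ^ CARD('n) + 4 powr real CARD('n) / (1 - 2 powr - \<alpha>)) * t powr - \<alpha>)"
proof (rule Kop_le_of_nn_integral_le[OF f(1)])
  let ?\<beta> = "\<alpha> + real CARD('n)"
  have "(\<integral>\<^sup>+ y. ennreal ((t + linf (x - y)) powr - ?\<beta> * \<bar>f y\<bar>) \<partial>lborel)
      \<le> (\<integral>\<^sup>+ y. ennreal ((t + linf (x - y)) powr - ?\<beta>) \<partial>lborel)"
    using f(2) by (intro nn_integral_mono ennreal_leI mult_left_le) auto
  also have "\<dots> \<le> ennreal ((2 ^ CARD('n) + 4 powr real CARD('n) / (1 - 2 powr - \<alpha>)) * t powr - \<alpha>)"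
    using t \<alpha> by (rule nn_integral_linf_kernel_le)
  finally show "(\<integral>\<^sup>+ y. ennreal ((t + linf (x - y)) powr - ?\<beta> * \<bar>f y\<bar>) \<partial>lborel)
      \<le> ennreal ((2 ^ CARD('n) + 4 powr real CARD('n) / (1 - 2 powr - \<alpha>)) * t powr - \<alpha>)" .
qed (use \<alpha> in \<open>simp add: powr_less_one less_imp_le add_nonneg_nonneg\<close>)

lemma Kop_le_tail_mass:
  fixes f :: "real ^ 'n \<Rightarrow> real"
  assumes t: "0 < t" and \<alpha>: "0 < \<alpha>" and D: "0 < D"
    and f: "f \<in> borel_measurable lborel" "\<And>y. \<bar>f y\<bar> \<le> 1"
    and far: "\<And>y. f y \<noteq> 0 \<Longrightarrow> D \<le> linf (x - y)"
  shows "Kop \<alpha> \<omega> t S f x \<le> (t * linf (x - dcenter \<omega> S)) powr (\<alpha> / 2)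
    * (4 powr real CARD('n) / (1 - 2 powr - \<alpha>) * D powr - \<alpha>)"
proof (rule Kop_le_of_nn_integral_le[OF f(1)])
  let ?\<beta> = "\<alpha> + real CARD('n)"
  have "ennreal ((t + linf (x - y)) powr - ?\<beta> * \<bar>f y\<bar>)
      \<le> ennreal (linf (x - y) powr - ?\<beta>) * indicator {y. D \<le> linf (x - y)} y" for y
  proof (cases "f y = 0")
    case False
    with far have y_far: "D \<le> linf (x - y)" .
    have "(t + linf (x - y)) powr - ?\<beta> * \<bar>f y\<bar> \<le> (t + linf (x - y)) powr - ?\<beta>"
      using f(2)[of y] by (simp add: mult_left_le)
    also have "\<dots> \<le> linf (x - y) powr - ?\<beta>"
      using t \<alpha> D y_far by (intro powr_mono2') auto
    finally have "ennreal ((t + linf (x - y)) powr - ?\<beta> * \<bar>f y\<bar>) \<le> ennreal (linf (x - y) powr - ?\<beta>)"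
      by (rule ennreal_leI)
    moreover have "indicator {y. D \<le> linf (x - y)} y = (1::ennreal)"
      using y_far by simp
    ultimately show ?thesis by (simp only: mult_1_right)
  qed simp
  then have "(\<integral>\<^sup>+ y. ennreal ((t + linf (x - y)) powr - ?\<beta> * \<bar>f y\<bar>) \<partial>lborel)
      \<le> (\<integral>\<^sup>+ y. ennreal (linf (x - y) powr - ?\<beta>) * indicator {y. D \<le> linf (x - y)} y \<partial>lborel)"
    by (rule nn_integral_mono)
  also have "\<dots> \<le> ennreal (4 powr real CARD('n) / (1 - 2 powr - \<alpha>) * D powr - \<alpha>)"
    using D \<alpha> by (rule nn_integral_linf_tail_le)
  finally show "(\<integral>\<^sup>+ y. ennreal ((t + linf (x - y)) powr - ?\<beta> * \<bar>f y\<bar>) \<partial>lborel)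
      \<le> ennreal (4 powr real CARD('n) / (1 - 2 powr - \<alpha>) * D powr - \<alpha>)" .
qed (use \<alpha> in \<open>simp add: powr_less_one less_imp_le\<close>)

lemma Kop_indicator_dcube_le:
  fixes \<omega> :: "int \<Rightarrow> 'n::finite \<Rightarrow> bool"
  assumes \<alpha>: "0 < \<alpha>" and S: "S \<in> dgrid \<omega>" and R: "R \<in> dgrid \<omega>" and Q: "Q \<in> dgrid \<omega>"
    and x: "x \<in> S" and t: "dside \<omega> R / 2 < t"
  shows "Kop \<alpha> \<omega> t S (indicator Q) x
    \<le> 2 powr (\<alpha> / 2 + real CARD('n)) * (measure lborel Q / measure lborel R)
      * (dside \<omega> S / dside \<omega> R) powr (\<alpha> / 2)"
proof -
  let ?s = "dside \<omega> S" and ?L = "dside \<omega> R" and ?d = "real CARD('n)"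
  have L: "0 < ?L" using R by (rule dside_pos)
  with t have t0: "0 < t" by linarith
  have "Kop \<alpha> \<omega> t S (indicator Q) x
      \<le> (t * linf (x - dcenter \<omega> S)) powr (\<alpha> / 2) * (t powr - (\<alpha> + ?d) * measure lborel Q)"
    using t0 \<alpha> dgrid_sets[OF Q] by (intro Kop_indicator_le_measure) (simp_all add: emeasure_dgrid[OF Q])
  also have "\<dots> = ((t * linf (x - dcenter \<omega> S)) powr (\<alpha> / 2) * t powr - (\<alpha> + ?d)) * measure lborel Q"
    by (simp only: mult.assoc)
  also have "\<dots> \<le> (2 powr (\<alpha> / 2 + ?d) * (?s / ?L) powr (\<alpha> / 2) / ?L powr ?d) * measure lborel Q"
    using linf_nonneg linf_dcenter_le[OF S x] L t \<alpha> by (intro mult_right_mono kernel_weight_le) auto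
  also have "?L powr ?d = measure lborel R"
    using L R by (simp add: measure_dgrid powr_realpow)
  finally show ?thesis by (simp add: ac_simps)
qed

lemma Kop_bounded_le_ancestor_ratio:
  fixes \<omega> :: "int \<Rightarrow> 'n::finite \<Rightarrow> bool" and f :: "real ^ 'n \<Rightarrow> real"
  assumes \<alpha>: "0 < \<alpha>" and S: "S \<in> dgrid \<omega>" and R: "R \<in> dgrid \<omega>" and SR: "S \<subseteq> R"
    and x: "x \<in> S" and t: "dside \<omega> R / 2 < t"
    and f: "f \<in> borel_measurable lborel" "\<And>y. \<bar>f y\<bar> \<le> 1"
  shows "Kop \<alpha> \<omega> t S f x
    \<le> (2 ^ CARD('n) + 4 powr real CARD('n) / (1 - 2 powr - \<alpha>)) * 2 powr (\<alpha> / 2 * (real r + 1))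
      * (dside \<omega> S / dside \<omega> (dancestor \<omega> r R)) powr (\<alpha> / 4)"
proof -
  let ?s = "dside \<omega> S" and ?L = "dside \<omega> R"
  let ?K = "2 ^ CARD('n) + 4 powr real CARD('n) / (1 - 2 powr - \<alpha>)"
  define A where "A = (t * linf (x - dcenter \<omega> S)) powr (\<alpha> / 2)"
  have s: "0 < ?s" and L: "0 < ?L" using S R by (simp_all add: dside_pos)
  with t have t0: "0 < t" by linarith
  have K: "0 \<le> ?K" using \<alpha> by (simp add: powr_less_one less_imp_le add_nonneg_nonneg)
  have "?s \<le> 2 ^ r * ?L"
    using dside_mono[OF S R SR] L by (simp add: order_trans[of ?s ?L])
  then have ratio: "?s / (2 ^ r * ?L) \<le> 1"
    using L by (simp add: pos_divide_le_eq)
  have "(t * linf (x - dcenter \<omega> S)) powr (\<alpha> / 2) * t powr - (\<alpha> + 0)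
      \<le> 2 powr (\<alpha> / 2 + 0) * (?s / ?L) powr (\<alpha> / 2) / ?L powr 0"
    using L t \<alpha> by (intro kernel_weight_le linf_nonneg linf_dcenter_le[OF S x]) auto
  then have "A * t powr - \<alpha> \<le> 2 powr (\<alpha> / 2) * (?s / ?L) powr (\<alpha> / 2)"
    using L by (simp add: A_def)
  also have "\<dots> = 2 powr (\<alpha> / 2 * (real r + 1)) * (?s / (2 ^ r * ?L)) powr (\<alpha> / 2)"
    using s L by (simp add: powr_def exp_add[symmetric] ln_div ln_mult ln_realpow field_simps)
  also have "\<dots> \<le> 2 powr (\<alpha> / 2 * (real r + 1)) * (?s / (2 ^ r * ?L)) powr (\<alpha> / 4)"
    using ratio s L \<alpha> by (intro mult_left_mono powr_mono') auto
  finally have weight: "A * t powr - \<alpha> \<le> 2 powr (\<alpha> / 2 * (real r + 1)) * (?s / (2 ^ r * ?L)) powr (\<alpha> / 4)" .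
  have "Kop \<alpha> \<omega> t S f x \<le> A * (?K * t powr - \<alpha>)"
    unfolding A_def using t0 \<alpha> f by (rule Kop_le_kernel_mass)
  also have "\<dots> = ?K * (A * t powr - \<alpha>)" by (simp only: ac_simps)
  also have "\<dots> \<le> ?K * (2 powr (\<alpha> / 2 * (real r + 1)) * (?s / (2 ^ r * ?L)) powr (\<alpha> / 4))"
    using weight K by (rule mult_left_mono)
  finally show ?thesis by (simp only: dside_dancestor[OF R] mult.assoc)
qed

lemma Kop_compl_dcube_le_good:
  fixes \<omega> :: "int \<Rightarrow> 'n::finite \<Rightarrow> bool"
  assumes \<alpha>: "0 < \<alpha>" and \<gamma>: "\<gamma> \<le> 1 / 4"
    and S: "S \<in> dgrid \<omega>" and Q: "Q \<in> dgrid \<omega>" and SQ: "S \<subseteq> Q"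
    and good: "r_good \<omega> r \<gamma> S" and large: "2 ^ r * dside \<omega> S \<le> dside \<omega> Q"
    and x: "x \<in> S" and t: "0 < t" "t \<le> dside \<omega> Q"
  shows "Kop \<alpha> \<omega> t S (indicator (UNIV - Q)) x
    \<le> 4 powr real CARD('n) / (1 - 2 powr - \<alpha>) * (dside \<omega> S / dside \<omega> Q) powr (\<alpha> / 4)"
proof -
  let ?s = "dside \<omega> S" and ?l = "dside \<omega> Q" and ?T = "4 powr real CARD('n) / (1 - 2 powr - \<alpha>)"
  define A where "A = (t * linf (x - dcenter \<omega> S)) powr (\<alpha> / 2)"
  define D where "D = ?s powr \<gamma> * ?l powr (1 - \<gamma>)"
  have s: "0 < ?s" and l: "0 < ?l" using S Q by (simp_all add: dside_pos)
  have T: "0 \<le> ?T" using \<alpha> by (simp add: powr_less_one less_imp_le)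
  have D: "0 < D" using s l by (simp add: D_def)
  have "D < linf_setdist S (frontier Q)"
    using good Q large unfolding r_good_def D_def by blast
  then have far: "D \<le> linf (x - y)" if "y \<notin> Q" for y
    using linf_setdist_frontier_le[OF x SQ that] by linarith
  have "A * D powr - \<alpha> \<le> (?l * ?s) powr (\<alpha> / 2) * D powr - \<alpha>"
    unfolding A_def using t linf_nonneg linf_dcenter_le[OF S x] \<alpha>
    by (intro mult_right_mono powr_mono2 mult_mono) auto
  also have "\<dots> = (?s / ?l) powr (\<alpha> / 2 - \<gamma> * \<alpha>)"
    using s l by (simp add: D_def powr_def exp_add[symmetric] exp_diff[symmetric] ln_div ln_mult field_simps)
  also have "\<dots> \<le> (?s / ?l) powr (\<alpha> / 4)"
    using \<gamma> \<alpha> s l dside_mono[OF S Q SQ] by (intro powr_mono') (auto simp: field_simps)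
  finally have weight: "A * D powr - \<alpha> \<le> (?s / ?l) powr (\<alpha> / 4)" .
  have "Kop \<alpha> \<omega> t S (indicator (UNIV - Q)) x \<le> A * (?T * D powr - \<alpha>)"
    unfolding A_def using t(1) \<alpha> D far dgrid_sets[OF Q]
    by (intro Kop_le_tail_mass) (auto simp: indicator_def)
  also have "\<dots> = ?T * (A * D powr - \<alpha>)" by (simp only: ac_simps)
  also have "\<dots> \<le> ?T * (?s / ?l) powr (\<alpha> / 4)"
    using weight T by (rule mult_left_mono)
  finally show ?thesis .
qed

lemma Kop_indicator_compl_dcube_le:
  fixes \<omega> :: "int \<Rightarrow> 'n::finite \<Rightarrow> bool"
  assumes \<alpha>: "0 < \<alpha>" and \<gamma>: "\<gamma> \<le> 1 / 4"
    and S: "S \<in> dgrid \<omega>" and R: "R \<in> dgrid \<omega>" and SR: "S \<subseteq> R" and good: "r_good \<omega> r \<gamma> S"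
    and x: "x \<in> S" and t: "dside \<omega> R / 2 < t" "t < dside \<omega> R"
    and Q: "Q \<in> dgrid \<omega>" and SQ: "S \<subseteq> Q"
  shows "Kop \<alpha> \<omega> t S (indicator (UNIV - Q)) x
    \<le> ((2 ^ CARD('n) + 4 powr real CARD('n) / (1 - 2 powr - \<alpha>)) * 2 powr (\<alpha> / 2 * (real r + 1))
        + 4 powr real CARD('n) / (1 - 2 powr - \<alpha>))
      * (dside \<omega> S / max (dside \<omega> (dancestor \<omega> r R)) (dside \<omega> Q)) powr (\<alpha> / 4)"
  (is "_ \<le> (?C\<^sub>1 + ?T) * _")
proof -
  have T: "0 \<le> ?T" and C\<^sub>1: "0 \<le> ?C\<^sub>1"
    using \<alpha> by (simp_all add: powr_less_one less_imp_le add_nonneg_nonneg)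
  have f: "indicator (UNIV - Q) \<in> borel_measurable lborel" "\<And>y. \<bar>indicator (UNIV - Q) y :: real\<bar> \<le> 1"
    using dgrid_sets[OF Q] by (auto simp: indicator_def)
  show ?thesis
  proof (cases "dside \<omega> Q \<le> dside \<omega> (dancestor \<omega> r R)")
    case True
    then have "Kop \<alpha> \<omega> t S (indicator (UNIV - Q)) x
        \<le> ?C\<^sub>1 * (dside \<omega> S / max (dside \<omega> (dancestor \<omega> r R)) (dside \<omega> Q)) powr (\<alpha> / 4)"
      using Kop_bounded_le_ancestor_ratio[OF \<alpha> S R SR x t(1) f, where r = r] by (simp add: max_absorb1)
    also have "\<dots> \<le> (?C\<^sub>1 + ?T) * (dside \<omega> S / max (dside \<omega> (dancestor \<omega> r R)) (dside \<omega> Q)) powr (\<alpha> / 4)"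
      using T by (intro mult_right_mono) auto
    finally show ?thesis .
  next
    case False
    have anc: "dside \<omega> (dancestor \<omega> r R) = 2 ^ r * dside \<omega> R"
      by (rule dside_dancestor[OF R])
    have "2 ^ r * dside \<omega> S \<le> 2 ^ r * dside \<omega> R"
      using dside_mono[OF S R SR] by simp
    with False have "2 ^ r * dside \<omega> S \<le> dside \<omega> Q"
      unfolding anc by linarith
    moreover have "dside \<omega> R \<le> 2 ^ r * dside \<omega> R"
      using dside_pos[OF R] by simp
    with False t(2) have "t \<le> dside \<omega> Q"
      unfolding anc by linarith
    moreover have "0 < t"
      using t(1) dside_pos[OF R] by linarith
    ultimately have "Kop \<alpha> \<omega> t S (indicator (UNIV - Q)) x \<le> ?T * (dside \<omega> S / dside \<omega> Q) powr (\<alpha> / 4)"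
      using Kop_compl_dcube_le_good[OF \<alpha> \<gamma> S Q SQ good _ x] by blast
    also have "\<dots> = ?T * (dside \<omega> S / max (dside \<omega> (dancestor \<omega> r R)) (dside \<omega> Q)) powr (\<alpha> / 4)"
      using False by (simp add: max_absorb2)
    also have "\<dots> \<le> (?C\<^sub>1 + ?T) * (dside \<omega> S / max (dside \<omega> (dancestor \<omega> r R)) (dside \<omega> Q)) powr (\<alpha> / 4)"
      using C\<^sub>1 by (intro mult_right_mono) auto
    finally show ?thesis .
  qed
qed

theorem lemma7p4:
  fixes \<alpha> :: real
  assumes "0 < \<alpha>" "\<alpha> \<le> 1"
  shows "\<exists>\<eta>>0. \<forall>r::nat. \<exists>C>0. \<forall>(\<omega>::int \<Rightarrow> 'n::finite \<Rightarrow> bool) S R Q x t.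
     S \<in> dgrid \<omega> \<longrightarrow> R \<in> dgrid \<omega> \<longrightarrow> S \<subseteq> R \<longrightarrow>
     r_good \<omega> r (\<alpha> / (4 * \<alpha> + 4 * real CARD('n))) S \<longrightarrow>
     x \<in> S \<longrightarrow> dside \<omega> R / 2 < t \<longrightarrow> t < dside \<omega> R \<longrightarrow>
     Q \<in> dgrid \<omega> \<longrightarrow> S \<subseteq> Q \<longrightarrow>
     Kop \<alpha> \<omega> t S (indicator (UNIV - Q)) x
        \<le> C * (dside \<omega> S / max (dside \<omega> (dancestor \<omega> r R)) (dside \<omega> Q)) powr \<eta>
     \<and> Kop \<alpha> \<omega> t S (indicator Q) x
        \<le> C * (measure lborel Q / measure lborel R) * (dside \<omega> S / dside \<omega> R) powr (\<alpha> / 2)"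
proof -
  have \<alpha>: "0 < \<alpha>" by (fact assms(1))
  have \<gamma>: "\<alpha> / (4 * \<alpha> + 4 * real CARD('n)) \<le> 1 / 4"
    using \<alpha> by (simp add: field_simps)
  define T where "T = 4 powr real CARD('n) / (1 - 2 powr - \<alpha>)"
  define C where "C r = ((2 ^ CARD('n) + T) * 2 powr (\<alpha> / 2 * (real r + 1)) + T) + 2 powr (\<alpha> / 2 + real CARD('n))"
    for r :: nat
  have T: "0 \<le> T" using \<alpha> by (simp add: T_def powr_less_one less_imp_le)
  show ?thesis
  proof (rule exI[of _ "\<alpha> / 4"], intro conjI allI, goal_cases)
    case 1
    show ?case using \<alpha> by simp
  next
    case (2 r)
    show ?case
    proof (intro exI[of _ "C r"] conjI allI impI, goal_cases)
      case 1
      show ?case using T by (simp add: C_def add_pos_nonneg)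
    next
      case (2 \<omega> S R Q x t)
      show ?case
        using Kop_indicator_compl_dcube_le[OF \<alpha> \<gamma> 2] T
        by (elim order_trans, intro mult_right_mono) (simp_all add: C_def T_def)
    next
      case (3 \<omega> S R Q x t)
      show ?case
        using Kop_indicator_dcube_le[OF \<alpha> 3(1,2,8,5,6)] T
        by (elim order_trans, intro mult_right_mono) (simp_all add: C_def)
    qed
  qed
qed

end
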